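(* Let $p$ and $q$ be distinct primes and $n = p^2 q$. Then the non-nilradical graph $\Omega(\mathbb{Z}_n)$ is not very cost effective.
   Context: $\mathbb{Z}_n$ is the ring of residue classes modulo $n$. The non-nilradical graph $\Omega(\mathbb{Z}_n)$ has as vertices the non-nilpotent zero-divisors of $\mathbb{Z}_n$, two distinct vertices being adjacent iff their product is $0$. For a graph $G=(V,E)$ and $S\subseteq V$, a vertex $v\in S$ is very cost effective if $|N(v)\cap S| < |N(v)\cap (V\setminus S)|$; $S$ is very cost effective if every vertex of $S$ is. A bipartition $\{S, V\setminus S\}$ is very cost effective if both parts are very cost effective, and $G$ is very cost effective if it has a very cost effective bipartition. *)

theory Defs
  imports Main "HOL-Computational_Algebra.Primes"
begin

definition nbhd :: "'a set \<Rightarrow> ('a \<Rightarrow> 'a \<Rightarrow> bool) \<Rightarrow> 'a \<Rightarrow> 'a set" where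
  "nbhd V E v = {u \<in> V. E v u}"

definition very_cost_effective_vertex ::
  "'a set \<Rightarrow> ('a \<Rightarrow> 'a \<Rightarrow> bool) \<Rightarrow> 'a set \<Rightarrow> 'a \<Rightarrow> bool" where
  "very_cost_effective_vertex V E S v \<longleftrightarrow>
     card (nbhd V E v \<inter> S) < card (nbhd V E v \<inter> (V - S))"

definition very_cost_effective_set ::
  "'a set \<Rightarrow> ('a \<Rightarrow> 'a \<Rightarrow> bool) \<Rightarrow> 'a set \<Rightarrow> bool" where
  "very_cost_effective_set V E S \<longleftrightarrow> (\<forall>v\<in>S. very_cost_effective_vertex V E S v)"

definition very_cost_effective_graph :: "'a set \<Rightarrow> ('a \<Rightarrow> 'a \<Rightarrow> bool) \<Rightarrow> bool" where
  "very_cost_effective_graph V E \<longleftrightarrow>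
     (\<exists>S. S \<subseteq> V \<and> very_cost_effective_set V E S \<and> very_cost_effective_set V E (V - S))"

text \<open>The ring Z_n is modelled by the residues {0..<n} with multiplication mod n.\<close>

definition zero_divisor_mod :: "nat \<Rightarrow> nat \<Rightarrow> bool" where
  "zero_divisor_mod n x \<longleftrightarrow> x < n \<and> (\<exists>y<n. y \<noteq> 0 \<and> (x * y) mod n = 0)"

definition nilpotent_mod :: "nat \<Rightarrow> nat \<Rightarrow> bool" where
  "nilpotent_mod n x \<longleftrightarrow> x < n \<and> (\<exists>k\<ge>1. (x ^ k) mod n = 0)"

definition nonnil_vertices :: "nat \<Rightarrow> nat set" where
  "nonnil_vertices n = {x. zero_divisor_mod n x \<and> \<not> nilpotent_mod n x}"

definition nonnil_adj :: "nat \<Rightarrow> nat \<Rightarrow> nat \<Rightarrow> bool" where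
  "nonnil_adj n x y \<longleftrightarrow> x \<noteq> y \<and> (x * y) mod n = 0"

end

theory Submission
  imports Defs
begin

text \<open>Modulo \<open>p\<^sup>2q\<close> the vertex \<open>p\<close> is isolated: \<open>pu \<equiv> 0\<close> forces \<open>pq \<bar> u\<close>, hence
  \<open>u\<^sup>2 \<equiv> 0\<close>, so \<open>u\<close> is nilpotent and not a vertex. An isolated vertex has no neighbours in
  either part of a bipartition, so it is not very cost effective in the part containing it.\<close>

lemma very_cost_effective_vertex_nbhd_nonempty:
  assumes "very_cost_effective_vertex V E S v"
  shows "nbhd V E v \<noteq> {}"
  using assms unfolding very_cost_effective_vertex_def by auto

lemma isolated_vertex_not_very_cost_effective_graph:
  assumes "v \<in> V" and "nbhd V E v = {}"
  shows "\<not> very_cost_effective_graph V E"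
proof
  assume "very_cost_effective_graph V E"
  then obtain S where "very_cost_effective_set V E S" "very_cost_effective_set V E (V - S)"
    unfolding very_cost_effective_graph_def by blast
  moreover have "v \<in> S \<or> v \<in> V - S" using assms(1) by blast
  ultimately obtain T where "very_cost_effective_vertex V E T v"
    unfolding very_cost_effective_set_def by blast
  with assms(2) show False by (auto dest: very_cost_effective_vertex_nbhd_nonempty)
qed

lemma zero_divisor_modI:
  assumes "x < n" and "0 < y" and "y < n" and "n dvd x * y"
  shows "zero_divisor_mod n x"
  unfolding zero_divisor_mod_def using assms
  by (intro conjI exI[of _ y]) (simp_all add: dvd_eq_mod_eq_0)

lemma nilpotent_mod_if_dvd_square:
  assumes "x < n" and "n dvd x\<^sup>2"
  shows "nilpotent_mod n x"
  using assms unfolding nilpotent_mod_def by (intro conjI exI[of _ 2]) auto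

lemma not_nilpotent_mod_if_prime_dvd:
  fixes n x q :: nat
  assumes "prime q" and "q dvd n" and "\<not> q dvd x"
  shows "\<not> nilpotent_mod n x"
proof
  assume "nilpotent_mod n x"
  then obtain k where "n dvd x ^ k" unfolding nilpotent_mod_def by auto
  with assms(2) have "q dvd x ^ k" by (rule dvd_trans)
  then have "q dvd x" by (rule prime_dvd_power[OF assms(1)])
  with assms(3) show False ..
qed

context
  fixes p q :: nat
  assumes prime_p: "prime p" and prime_q: "prime q" and pq: "p \<noteq> q"
begin

private lemma prime_ge_2: "p \<ge> 2" "q \<ge> 2"
  using prime_p prime_q prime_ge_2_nat by auto

lemma prime_in_nonnil_vertices: "p \<in> nonnil_vertices (p\<^sup>2 * q)"
proof -
  have "p < p * q" and pq_lt: "p * q < p\<^sup>2 * q"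
    using prime_ge_2 by (simp_all add: power2_eq_square)
  then have "p < p\<^sup>2 * q" by linarith
  moreover have "p\<^sup>2 * q dvd p * (p * q)"
    by (simp add: power2_eq_square mult.assoc)
  ultimately have "zero_divisor_mod (p\<^sup>2 * q) p"
    using pq_lt prime_ge_2 by (intro zero_divisor_modI[of _ _ "p * q"]) simp_all
  moreover have "\<not> q dvd p"
  proof
    assume "q dvd p"
    with pq show False using primes_dvd_imp_eq[OF prime_q prime_p] by simp
  qed
  then have "\<not> nilpotent_mod (p\<^sup>2 * q) p"
    by (intro not_nilpotent_mod_if_prime_dvd[OF prime_q]) simp_all
  ultimately show ?thesis unfolding nonnil_vertices_def by simp
qed

lemma nbhd_prime_empty: "nbhd (nonnil_vertices (p\<^sup>2 * q)) (nonnil_adj (p\<^sup>2 * q)) p = {}"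
proof -
  have "u \<notin> nonnil_vertices (p\<^sup>2 * q)" if "nonnil_adj (p\<^sup>2 * q) p u" for u
  proof
    assume "u \<in> nonnil_vertices (p\<^sup>2 * q)"
    then have u_lt: "u < p\<^sup>2 * q" and u_nonnil: "\<not> nilpotent_mod (p\<^sup>2 * q) u"
      unfolding nonnil_vertices_def zero_divisor_mod_def by simp_all
    from that have "p * (p * q) dvd p * u"
      unfolding nonnil_adj_def by (simp add: dvd_eq_mod_eq_0 power2_eq_square mult.assoc)
    then have "p * q dvd u"
      using prime_ge_2 by simp
    then obtain m where "u = p * q * m" ..
    then have "p\<^sup>2 * q dvd u\<^sup>2"
      by (simp add: power2_eq_square algebra_simps)
    with u_lt have "nilpotent_mod (p\<^sup>2 * q) u"
      by (rule nilpotent_mod_if_dvd_square)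
    with u_nonnil show False ..
  qed
  then show ?thesis unfolding nbhd_def by blast
qed

end

theorem mainTheorem6:
  fixes p q :: nat
  assumes "prime p" and "prime q" and "p \<noteq> q"
  shows "\<not> very_cost_effective_graph (nonnil_vertices (p^2 * q)) (nonnil_adj (p^2 * q))"
  by (rule isolated_vertex_not_very_cost_effective_graph
      [OF prime_in_nonnil_vertices[OF assms] nbhd_prime_empty[OF assms]])

end
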